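(* Let $m\ge 2$ be even and let $\{1,\dots,m\}=J_1\cup J_2$ be a partition with $|J_1|=|J_2|=m/2$. Consider the two-stage robust lot-sizing problem $$\min_{\mathbf x}\ \sum_{i=1}^m c_ix_i+\max_{\mathbf h\in\mathcal U}\ \min_{\mathbf y(\mathbf h)\ge\mathbf 0}\ \sum_{i=1}^m\sum_{j=1}^m d_{ij}y_{ij}(\mathbf h)$$ subject to $x_i+\sum_{j=1}^m y_{ji}(\mathbf h)-\sum_{j=1}^m y_{ij}(\mathbf h)\ge h_i$ for all $i\in[m]$ and all $\mathbf h\in\mathcal U$, and $0\le x_i\le K_i$ for all $i\in[m]$, with data $c_i=0$ for $i\in J_1$, $c_i=1$ for $i\in J_2$, $K_i=1$ for all $i$, $d_{ij}=0$ if $i\in J_1,j\in J_2$ and $d_{ij}=+\infty$ otherwise (so any policy sending positive flow $y_{ij}$ on a pair with $d_{ij}=+\infty$ has infinite cost), and $$\mathcal U=\Big\{\mathbf h\in[0,1]^m \;\Big|\; \sum_{i=1}^m h_i\le m/2\Big\}.$$ Let $z_{\sf AR}(\mathcal U)$ be the optimal value of this problem when $\mathbf y(\mathbf h)\in\mathbb R^{m^2}_+$ may depend arbitrarily on $\mathbf h$, and $z_{\sf Aff}(\mathcal U)$ its optimal value when $\mathbf y(\mathbf h)$ is restricted to be affine in $\mathbf h$, i.e., $\mathbf y(\mathbf h)=\mathbf P\mathbf h+\mathbf q$ with $\mathbf P\in\mathbb R^{m^2\times m}$, $\mathbf q\in\mathbb R^{m^2}$ and $\mathbf P\mathbf h+\mathbf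 q\ge\mathbf 0$ for all $\mathbf h\in\mathcal U$. Then $z_{\sf AR}(\mathcal U)=0$ and $z_{\sf Aff}(\mathcal U)=m/2-1$. In particular, the ratio between the optimal affine and optimal adjustable values is unbounded. *)

theory Defs
  imports Complex_Main "HOL-Library.Extended_Real"
begin

text \<open>Vectors are functions nat => real indexed by 1..m; flows y i j, costs d i j :: ereal
  (d i j = infinity allowed; Isabelle's convention infinity * 0 = 0, so a policy has
  infinite cost iff it sends positive flow on a pair with infinite cost).\<close>

definition first_stage_feasible :: "nat \<Rightarrow> (nat \<Rightarrow> real) \<Rightarrow> (nat \<Rightarrow> real) \<Rightarrow> bool" where
  "first_stage_feasible m K x \<longleftrightarrow> (\<forall>i\<in>{1..m}. 0 \<le> x i \<and> x i \<le> K i)"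

definition second_stage_feasible ::
  "nat \<Rightarrow> (nat \<Rightarrow> real) \<Rightarrow> (nat \<Rightarrow> real) \<Rightarrow> (nat \<Rightarrow> nat \<Rightarrow> real) \<Rightarrow> bool" where
  "second_stage_feasible m x h y \<longleftrightarrow>
     (\<forall>i\<in>{1..m}. \<forall>j\<in>{1..m}. 0 \<le> y i j) \<and>
     (\<forall>i\<in>{1..m}. x i + (\<Sum>j=1..m. y j i) - (\<Sum>j=1..m. y i j) \<ge> h i)"

definition flow_cost :: "nat \<Rightarrow> (nat \<Rightarrow> nat \<Rightarrow> ereal) \<Rightarrow> (nat \<Rightarrow> nat \<Rightarrow> real) \<Rightarrow> ereal" where
  "flow_cost m d y = (\<Sum>i=1..m. \<Sum>j=1..m. d i j * ereal (y i j))"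

definition first_stage_cost :: "nat \<Rightarrow> (nat \<Rightarrow> real) \<Rightarrow> (nat \<Rightarrow> real) \<Rightarrow> ereal" where
  "first_stage_cost m c x = ereal (\<Sum>i=1..m. c i * x i)"

definition z_AR ::
  "nat \<Rightarrow> (nat \<Rightarrow> real) \<Rightarrow> (nat \<Rightarrow> real) \<Rightarrow> (nat \<Rightarrow> nat \<Rightarrow> ereal) \<Rightarrow> (nat \<Rightarrow> real) set \<Rightarrow> ereal" where
  "z_AR m c K d U =
     (INF x \<in> {x. first_stage_feasible m K x}.
        first_stage_cost m c x +
        (SUP h\<in>U. INF y \<in> {y. second_stage_feasible m x h y}. flow_cost m d y))"

definition affine_policy ::
  "nat \<Rightarrow> (nat \<Rightarrow> nat \<Rightarrow> nat \<Rightarrow> real) \<Rightarrow> (nat \<Rightarrow> nat \<Rightarrow> real) \<Rightarrow> (nat \<Rightarrow> real) \<Rightarrow> nat \<Rightarrow> nat \<Rightarrow> real" where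
  "affine_policy m P q h = (\<lambda>i j. (\<Sum>k=1..m. P i j k * h k) + q i j)"

definition z_Aff ::
  "nat \<Rightarrow> (nat \<Rightarrow> real) \<Rightarrow> (nat \<Rightarrow> real) \<Rightarrow> (nat \<Rightarrow> nat \<Rightarrow> ereal) \<Rightarrow> (nat \<Rightarrow> real) set \<Rightarrow> ereal" where
  "z_Aff m c K d U =
     (INF (x, P, q) \<in> {(x, P, q). first_stage_feasible m K x \<and>
                          (\<forall>h\<in>U. second_stage_feasible m x h (affine_policy m P q h))}.
        first_stage_cost m c x + (SUP h\<in>U. flow_cost m d (affine_policy m P q h)))"

end

theory Submission
  imports Defs
begin

text \<open>With fully adjustable flows, producing one unit at each location of \<open>J1\<close> costs nothing:
  a demand \<open>h \<in> U\<close> is met by shipping \<open>(1 - h i) * h j / (\<Sum>l\<in>J1. 1 - h l)\<close> from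
  \<open>i \<in> J1\<close> to \<open>j \<in> J2\<close>, and the budget \<open>\<Sum>i. h i \<le> m/2\<close> makes the spare supply
  \<open>\<Sum>l\<in>J1. 1 - h l\<close> cover the demand on \<open>J2\<close>.

  An affine policy of finite cost ships only from \<open>J1\<close> to \<open>J2\<close>, and nothing out of a location
  \<open>i \<in> J1\<close> with \<open>h i = 1\<close>. Applied to the demands \<open>e i\<close> and \<open>e i + e k\<close> (which lie in \<open>U\<close>
  once \<open>m \<ge> 4\<close>), this forces \<open>y i j h = q i j * (1 - h i)\<close> for a fixed \<open>i \<in> J1\<close>. Under the
  demand that saturates \<open>J1 - {i}\<close> and one \<open>j \<in> J2\<close>, location \<open>j\<close> therefore receives only
  \<open>q i j\<close>, while the zero demand gives \<open>\<Sum>j\<in>J2. q i j \<le> x i \<le> 1\<close>. Hence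
  \<open>\<Sum>j\<in>J2. 1 - x j \<le> 1\<close>, i.e. the first-stage cost \<open>\<Sum>j\<in>J2. x j\<close> is at least \<open>m/2 - 1\<close>;
  the policy \<open>y i j h = (1 - h i) / (m/2)\<close> with \<open>x j = 1 - 2/m\<close> on \<open>J2\<close> attains this.\<close>

lemma flow_cost_nonneg:
  assumes "\<And>i j. i \<in> {1..m} \<Longrightarrow> j \<in> {1..m} \<Longrightarrow> 0 \<le> d i j"
    and "\<And>i j. i \<in> {1..m} \<Longrightarrow> j \<in> {1..m} \<Longrightarrow> 0 \<le> y i j"
  shows "0 \<le> flow_cost m d y"
  unfolding flow_cost_def using assms by (auto intro!: sum_nonneg)

lemma flow_cost_eq_0:
  assumes "\<And>i j. i \<in> {1..m} \<Longrightarrow> j \<in> {1..m} \<Longrightarrow> d i j = 0 \<or> y i j = 0"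
  shows "flow_cost m d y = 0"
  unfolding flow_cost_def
proof (intro sum.neutral ballI)
  fix i j assume "i \<in> {1..m}" "j \<in> {1..m}"
  then show "d i j * ereal (y i j) = 0"
    using assms by auto
qed

lemma flow_cost_eq_PInfty:
  assumes "a \<in> {1..m}" "b \<in> {1..m}" "d a b = \<infinity>" "0 < y a b"
  shows "flow_cost m d y = \<infinity>"
proof -
  have "d a b * ereal (y a b) = \<infinity>"
    using assms(3,4) by simp
  then show ?thesis
    unfolding flow_cost_def sum_Pinfty using assms(1,2) by blast
qed

lemma affine_policy_indicator:
  assumes "A \<subseteq> {1..m}"
  shows "affine_policy m P q (\<lambda>k. of_bool (k \<in> A)) i j = (\<Sum>k\<in>A. P i j k) + q i j"
  unfolding affine_policy_def using assms by (simp add: Int_absorb1)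

lemma affine_policy_single_coordinate:
  assumes "l \<in> {1..m}" and "\<And>k. k \<in> {1..m} \<Longrightarrow> k \<noteq> l \<Longrightarrow> P i j k = 0"
  shows "affine_policy m P q h i j = P i j l * h l + q i j"
proof -
  have "(\<Sum>k=1..m. P i j k * h k) = (\<Sum>k\<in>{l}. P i j k * h k)"
    using assms by (intro sum.mono_neutral_right) auto
  then show ?thesis unfolding affine_policy_def by simp
qed

lemma affine_policy_eq_if_vanishing:
  assumes l: "l \<in> {1..m}"
    and vanish_l: "affine_policy m P q (\<lambda>k. of_bool (k \<in> {l})) i j = 0"
    and vanish_lk: "\<And>k. k \<in> {1..m} \<Longrightarrow> k \<noteq> l \<Longrightarrow>
                      affine_policy m P q (\<lambda>k'. of_bool (k' \<in> {l, k})) i j = 0"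
  shows "affine_policy m P q h i j = q i j * (1 - h l)"
proof -
  have diag: "P i j l = - q i j"
    using vanish_l affine_policy_indicator[of "{l}" m P q i j] l by simp
  have off_diag: "P i j k = 0" if "k \<in> {1..m}" "k \<noteq> l" for k
    using vanish_lk[OF that] affine_policy_indicator[of "{l, k}" m P q i j] l that diag by simp
  show ?thesis
    using affine_policy_single_coordinate[where P = P and i = i and j = j, OF l off_diag] diag
    by (simp add: algebra_simps)
qed

lemma proportional_plan_outflow_le:
  fixes s t :: "'a \<Rightarrow> real"
  assumes "0 \<le> s i" "\<And>j. j \<in> B \<Longrightarrow> 0 \<le> t j" "sum t B \<le> S"
  shows "(\<Sum>j\<in>B. s i * t j / S) \<le> s i"
proof -
  have "sum t B / S \<le> 1"
    using assms(3) sum_nonneg[of B t] assms(2) by (cases "S = 0") (auto simp: divide_le_eq_1)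
  then have "s i * (sum t B / S) \<le> s i"
    using assms(1) mult_left_le by blast
  then show ?thesis
    by (simp add: sum_distrib_left sum_divide_distrib)
qed

lemma proportional_plan_inflow_eq:
  fixes s t :: "'a \<Rightarrow> real"
  assumes "0 \<le> t j" "t j \<le> sum s A" "\<And>i. i \<in> A \<Longrightarrow> 0 \<le> s i"
  shows "(\<Sum>i\<in>A. s i * t j / sum s A) = t j"
proof (cases "sum s A = 0")
  case True
  then show ?thesis using assms(1,2) by simp
next
  case False
  then show ?thesis by (simp add: sum_distrib_right[symmetric] sum_divide_distrib[symmetric])
qed

lemma z_AR_nonneg:
  assumes "\<And>i. i \<in> {1..m} \<Longrightarrow> 0 \<le> c i"
    and "\<And>i j. i \<in> {1..m} \<Longrightarrow> j \<in> {1..m} \<Longrightarrow> 0 \<le> d i j"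
    and "h \<in> U"
  shows "0 \<le> z_AR m c K d U"
  unfolding z_AR_def
proof (rule INF_greatest)
  fix x assume "x \<in> {x. first_stage_feasible m K x}"
  then have "0 \<le> first_stage_cost m c x"
    unfolding first_stage_feasible_def first_stage_cost_def using assms(1)
    by (auto intro!: sum_nonneg)
  moreover have "0 \<le> (INF y \<in> {y. second_stage_feasible m x h y}. flow_cost m d y)"
    using assms(2) by (auto intro!: INF_greatest flow_cost_nonneg simp: second_stage_feasible_def)
  then have "0 \<le> (SUP h\<in>U. INF y \<in> {y. second_stage_feasible m x h y}. flow_cost m d y)"
    using assms(3) by (blast intro: SUP_upper2)
  ultimately show "0 \<le> first_stage_cost m c x +
                        (SUP h\<in>U. INF y \<in> {y. second_stage_feasible m x h y}. flow_cost m d y)"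
    by simp
qed

lemma z_AR_le_policy:
  assumes "first_stage_feasible m K x" "\<And>h. h \<in> U \<Longrightarrow> second_stage_feasible m x h (Y h)"
  shows "z_AR m c K d U \<le> first_stage_cost m c x + (SUP h\<in>U. flow_cost m d (Y h))"
proof -
  have "(SUP h\<in>U. INF y \<in> {y. second_stage_feasible m x h y}. flow_cost m d y)
          \<le> (SUP h\<in>U. flow_cost m d (Y h))"
    using assms(2) by (intro SUP_mono) (auto intro: INF_lower)
  then show ?thesis
    unfolding z_AR_def using assms(1) by (intro INF_lower2[of x]) (auto intro: add_left_mono)
qed

lemma z_Aff_le_policy:
  assumes "first_stage_feasible m K x"
    and "\<And>h. h \<in> U \<Longrightarrow> second_stage_feasible m x h (affine_policy m P q h)"
  shows "z_Aff m c K d U \<le> first_stage_cost m c x + (SUP h\<in>U. flow_cost m d (affine_policy m P q h))"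
  unfolding z_Aff_def using assms by (intro INF_lower2[of "(x, P, q)"]) auto

locale affine_gap_instance =
  fixes m :: nat and J1 J2 :: "nat set"
    and c K :: "nat \<Rightarrow> real" and d :: "nat \<Rightarrow> nat \<Rightarrow> ereal" and U :: "(nat \<Rightarrow> real) set"
  assumes even_m: "even m" and two_le_m: "m \<ge> 2"
    and J_union: "J1 \<union> J2 = {1..m}" and J_disjoint: "J1 \<inter> J2 = {}"
    and card_J1: "card J1 = m div 2" and card_J2: "card J2 = m div 2"
    and c_def: "c = (\<lambda>i. if i \<in> J1 then 0 else 1)"
    and K_def: "K = (\<lambda>i. 1)"
    and d_def: "d = (\<lambda>i j. if i \<in> J1 \<and> j \<in> J2 then 0 else \<infinity>)"
    and U_def: "U = {h. (\<forall>i\<in>{1..m}. 0 \<le> h i \<and> h i \<le> 1) \<and> (\<forall>i. i \<notin> {1..m} \<longrightarrow> h i = 0)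
                 \<and> (\<Sum>i=1..m. h i) \<le> real m / 2}"
begin

definition n :: real where "n = real m / 2"

definition bipartite_flow :: "(nat \<Rightarrow> nat \<Rightarrow> real) \<Rightarrow> bool" where
  "bipartite_flow y \<longleftrightarrow> (\<forall>a\<in>{1..m}. \<forall>b\<in>{1..m}. y a b \<noteq> 0 \<longrightarrow> a \<in> J1 \<and> b \<in> J2)"

lemma J1_subset: "J1 \<subseteq> {1..m}" and J2_subset: "J2 \<subseteq> {1..m}"
  using J_union by auto

lemma finite_J1: "finite J1" and finite_J2: "finite J2"
  using J1_subset J2_subset by (auto intro: finite_subset)

lemma of_nat_half_m: "real (m div 2) = n"
  using even_m unfolding n_def by auto

lemma one_le_n: "1 \<le> n"
  using two_le_m unfolding n_def by simp

lemma sum_J1_J2: "(\<Sum>i=1..m. f i) = sum f J1 + sum f J2"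
  using sum.union_disjoint[OF finite_J1 finite_J2 J_disjoint, of f] J_union by simp

lemma ball_J1_J2: "(\<forall>i\<in>{1..m}. P i) \<longleftrightarrow> (\<forall>i\<in>J1. P i) \<and> (\<forall>i\<in>J2. P i)"
  using J_union by blast

lemma sum_one_minus_J1: "(\<Sum>i\<in>J1. 1 - f i) = n - sum f J1"
  using card_J1 of_nat_half_m by (simp add: sum_subtractf)

lemma sum_one_minus_J2: "(\<Sum>i\<in>J2. 1 - f i) = n - sum f J2"
  using card_J2 of_nat_half_m by (simp add: sum_subtractf)

lemma mem_U_bounds: "h \<in> U \<Longrightarrow> i \<in> {1..m} \<Longrightarrow> 0 \<le> h i \<and> h i \<le> 1"
  using U_def by auto

lemma mem_U_budget: "h \<in> U \<Longrightarrow> sum h J1 + sum h J2 \<le> n"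
  using U_def sum_J1_J2[of h] unfolding n_def by auto

lemma indicator_mem_U:
  assumes "A \<subseteq> {1..m}" "card A \<le> m div 2"
  shows "(\<lambda>k. of_bool (k \<in> A)) \<in> U"
proof -
  have "(\<Sum>k=1..m. of_bool (k \<in> A) :: real) = real (card A)"
    using assms(1) by (simp add: Int_absorb1)
  also have "\<dots> \<le> n"
    using assms(2) of_nat_half_m by (metis of_nat_le_iff)
  finally show ?thesis
    unfolding U_def n_def using assms(1) by auto
qed

lemma zero_mem_U: "(\<lambda>_. 0) \<in> U"
  using indicator_mem_U[of "{}"] by simp

lemma d_nonneg: "0 \<le> d i j"
  unfolding d_def by simp

lemma first_stage_cost_eq: "first_stage_cost m c x = ereal (sum x J2)"
proof -
  have "(\<Sum>i\<in>J2. c i * x i) = sum x J2"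
    unfolding c_def using J_disjoint by (intro sum.cong) auto
  then show ?thesis
    unfolding first_stage_cost_def sum_J1_J2 by (simp add: c_def)
qed

lemma bipartite_flow_restrict: "bipartite_flow (\<lambda>i j. if i \<in> J1 \<and> j \<in> J2 then f i j else 0)"
  unfolding bipartite_flow_def by simp

lemma bipartite_flowD:
  "bipartite_flow y \<Longrightarrow> a \<in> {1..m} \<Longrightarrow> b \<in> {1..m} \<Longrightarrow> \<not> (a \<in> J1 \<and> b \<in> J2) \<Longrightarrow> y a b = 0"
  unfolding bipartite_flow_def by blast

lemma flow_cost_bipartite:
  assumes "bipartite_flow y"
  shows "flow_cost m d y = 0"
  using bipartite_flowD[OF assms] by (intro flow_cost_eq_0) (auto simp: d_def)

lemma second_stage_feasible_bipartite:
  assumes "bipartite_flow y"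
  shows "second_stage_feasible m x h y \<longleftrightarrow>
           (\<forall>i\<in>J1. \<forall>j\<in>J2. 0 \<le> y i j) \<and>
           (\<forall>i\<in>J1. h i + (\<Sum>j\<in>J2. y i j) \<le> x i) \<and>
           (\<forall>j\<in>J2. h j \<le> x j + (\<Sum>i\<in>J1. y i j))"
proof -
  note zero = bipartite_flowD[OF assms]
  have outflow_J1: "(\<Sum>b=1..m. y i b) = (\<Sum>b\<in>J2. y i b)" if "i \<in> J1" for i
    using that zero J1_subset J2_subset by (intro sum.mono_neutral_right) auto
  have outflow_J2: "(\<Sum>b=1..m. y j b) = 0" if "j \<in> J2" for j
    using that zero J2_subset J_disjoint by (intro sum.neutral) blast
  have inflow_J1: "(\<Sum>a=1..m. y a i) = 0" if "i \<in> J1" for i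
    using that zero J1_subset J_disjoint by (intro sum.neutral) blast
  have inflow_J2: "(\<Sum>a=1..m. y a j) = (\<Sum>a\<in>J1. y a j)" if "j \<in> J2" for j
    using that zero J1_subset J2_subset by (intro sum.mono_neutral_right) auto
  have nonneg: "(\<forall>i\<in>{1..m}. \<forall>j\<in>{1..m}. 0 \<le> y i j) \<longleftrightarrow> (\<forall>i\<in>J1. \<forall>j\<in>J2. 0 \<le> y i j)"
    using zero J1_subset J2_subset by (metis order.refl subsetD)
  have balance: "(\<forall>i\<in>{1..m}. h i \<le> x i + (\<Sum>j=1..m. y j i) - (\<Sum>j=1..m. y i j)) \<longleftrightarrow>
      (\<forall>i\<in>J1. h i + (\<Sum>j\<in>J2. y i j) \<le> x i) \<and> (\<forall>j\<in>J2. h j \<le> x j + (\<Sum>i\<in>J1. y i j))"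
    unfolding ball_J1_J2 by (auto simp: outflow_J1 outflow_J2 inflow_J1 inflow_J2 simp del: One_nat_def)
  show ?thesis
    unfolding second_stage_feasible_def nonneg balance ..
qed

lemma proportional_policy_feasible:
  assumes h: "h \<in> U"
  shows "second_stage_feasible m (\<lambda>i. of_bool (i \<in> J1)) h
           (\<lambda>i j. if i \<in> J1 \<and> j \<in> J2 then (1 - h i) * h j / (\<Sum>l\<in>J1. 1 - h l) else 0)"
proof -
  have bounds: "\<And>i. i \<in> J1 \<union> J2 \<Longrightarrow> 0 \<le> h i \<and> h i \<le> 1"
    using mem_U_bounds[OF h] J_union by auto
  have demand_le_supply: "sum h J2 \<le> (\<Sum>l\<in>J1. 1 - h l)"
    using mem_U_budget[OF h] sum_one_minus_J1[of h] by simp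
  have outflow: "(\<Sum>j\<in>J2. (1 - h i) * h j / (\<Sum>l\<in>J1. 1 - h l)) \<le> 1 - h i" if "i \<in> J1" for i
    using that bounds demand_le_supply by (intro proportional_plan_outflow_le) auto
  have inflow: "(\<Sum>i\<in>J1. (1 - h i) * h j / (\<Sum>l\<in>J1. 1 - h l)) = h j" if j: "j \<in> J2" for j
  proof (rule proportional_plan_inflow_eq)
    have "h j \<le> sum h J2"
      using j bounds finite_J2 by (intro member_le_sum) auto
    then show "h j \<le> (\<Sum>l\<in>J1. 1 - h l)"
      using demand_le_supply by linarith
  qed (use j bounds in auto)
  have supply_nonneg: "0 \<le> (\<Sum>l\<in>J1. 1 - h l)"
    using demand_le_supply sum_nonneg[of J2 h] bounds by force
  show ?thesis
    unfolding second_stage_feasible_bipartite[OF bipartite_flow_restrict]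
    using bounds supply_nonneg outflow inflow J_disjoint by (force intro: divide_nonneg_nonneg)
qed

lemma z_AR_eq_0: "z_AR m c K d U = 0"
proof (rule antisym)
  let ?x = "\<lambda>i. of_bool (i \<in> J1) :: real"
  let ?Y = "\<lambda>h i j. if i \<in> J1 \<and> j \<in> J2 then (1 - h i) * h j / (\<Sum>l\<in>J1. 1 - h l) else 0"
  have "first_stage_feasible m K ?x"
    unfolding first_stage_feasible_def K_def by simp
  then have "z_AR m c K d U \<le> first_stage_cost m c ?x + (SUP h\<in>U. flow_cost m d (?Y h))"
    using proportional_policy_feasible by (rule z_AR_le_policy)
  also have "\<dots> = 0"
  proof -
    have "sum ?x J2 = 0"
      using J_disjoint by (intro sum.neutral) auto
    moreover have "U \<noteq> {}"
      using zero_mem_U by auto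
    ultimately show ?thesis
      by (simp add: first_stage_cost_eq flow_cost_bipartite[OF bipartite_flow_restrict])
  qed
  finally show "z_AR m c K d U \<le> 0" .
  show "0 \<le> z_AR m c K d U"
    using zero_mem_U d_nonneg by (intro z_AR_nonneg) (auto simp: c_def)
qed

lemma uniform_affine_policy_eq:
  "affine_policy m (\<lambda>i j k. if i \<in> J1 \<and> j \<in> J2 \<and> k = i then - 1 / n else 0)
     (\<lambda>i j. if i \<in> J1 \<and> j \<in> J2 then 1 / n else 0) h
   = (\<lambda>i j. if i \<in> J1 \<and> j \<in> J2 then (1 - h i) / n else 0)"
proof (intro ext)
  fix i j
  show "affine_policy m (\<lambda>i j k. if i \<in> J1 \<and> j \<in> J2 \<and> k = i then - 1 / n else 0)
          (\<lambda>i j. if i \<in> J1 \<and> j \<in> J2 then 1 / n else 0) h i j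
        = (if i \<in> J1 \<and> j \<in> J2 then (1 - h i) / n else 0)"
  proof (cases "i \<in> J1 \<and> j \<in> J2")
    case True
    then have "i \<in> {1..m}"
      using J1_subset by auto
    with True show ?thesis
      by (subst affine_policy_single_coordinate[of i]) (auto simp: diff_divide_distrib)
  next
    case False
    then show ?thesis
      by (auto simp: affine_policy_def)
  qed
qed

lemma uniform_policy_feasible:
  assumes h: "h \<in> U"
  shows "second_stage_feasible m (\<lambda>i. if i \<in> J1 then 1 else 1 - 1 / n) h
           (\<lambda>i j. if i \<in> J1 \<and> j \<in> J2 then (1 - h i) / n else 0)"
proof -
  have bounds: "\<And>i. i \<in> J1 \<union> J2 \<Longrightarrow> 0 \<le> h i \<and> h i \<le> 1"
    using mem_U_bounds[OF h] J_union by auto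
  have outflow: "(\<Sum>j\<in>J2. (1 - h i) / n) = 1 - h i" for i
    using card_J2 of_nat_half_m one_le_n by simp
  have inflow: "h j \<le> 1 - 1 / n + (\<Sum>i\<in>J1. (1 - h i) / n)" if j: "j \<in> J2" for j
  proof -
    have "h j \<le> sum h J2"
      using j bounds finite_J2 by (intro member_le_sum) auto
    then have "sum h J1 + h j \<le> n"
      using mem_U_budget[OF h] by linarith
    moreover have "0 \<le> (n - 1) * (1 - h j)"
      using bounds j one_le_n by simp
    ultimately have "n * h j \<le> n - 1 + (n - sum h J1)"
      by (simp add: algebra_simps)
    then have "h j \<le> (n - 1 + (n - sum h J1)) / n"
      using one_le_n by (simp add: pos_le_divide_eq mult.commute)
    also have "\<dots> = 1 - 1 / n + (\<Sum>i\<in>J1. (1 - h i) / n)"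
      using one_le_n by (simp add: sum_divide_distrib[symmetric] sum_one_minus_J1 field_simps)
    finally show ?thesis .
  qed
  show ?thesis
    unfolding second_stage_feasible_bipartite[OF bipartite_flow_restrict]
    using bounds outflow inflow J_disjoint one_le_n by auto
qed

lemma z_Aff_le: "z_Aff m c K d U \<le> ereal (n - 1)"
proof -
  let ?x = "\<lambda>i. if i \<in> J1 then 1 else 1 - 1 / n"
  let ?P = "\<lambda>i j k. if i \<in> J1 \<and> j \<in> J2 \<and> k = i then - 1 / n else 0"
  let ?q = "\<lambda>i j. if i \<in> J1 \<and> j \<in> J2 then 1 / n else 0"
  have "first_stage_feasible m K ?x"
    unfolding first_stage_feasible_def K_def using one_le_n by auto
  then have "z_Aff m c K d U \<le> first_stage_cost m c ?x + (SUP h\<in>U. flow_cost m d (affine_policy m ?P ?q h))"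
    using uniform_policy_feasible by (intro z_Aff_le_policy) (simp_all add: uniform_affine_policy_eq)
  also have "\<dots> = ereal (n - 1)"
  proof -
    have "sum ?x J2 = (\<Sum>i\<in>J2. 1 - 1 / n)"
      using J_disjoint by (intro sum.cong) auto
    also have "\<dots> = n - 1"
      using card_J2 of_nat_half_m one_le_n by (simp add: algebra_simps)
    finally have "sum ?x J2 = n - 1" .
    moreover have "U \<noteq> {}"
      using zero_mem_U by auto
    ultimately show ?thesis
      by (simp add: first_stage_cost_eq uniform_affine_policy_eq flow_cost_bipartite[OF bipartite_flow_restrict])
  qed
  finally show ?thesis .
qed

lemma outflow_vanishes_if_saturated:
  assumes "second_stage_feasible m x h y" "bipartite_flow y"
    and "i \<in> J1" "x i \<le> 1" "h i = 1" "j \<in> J2"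
  shows "y i j = 0"
proof -
  have nonneg: "\<forall>j\<in>J2. 0 \<le> y i j" and "h i + (\<Sum>j\<in>J2. y i j) \<le> x i"
    using assms(1,3) unfolding second_stage_feasible_bipartite[OF assms(2)] by auto
  then have "(\<Sum>j\<in>J2. y i j) = 0"
    using assms(4,5) sum_nonneg[of J2 "y i"] by force
  then show ?thesis
    using nonneg assms(6) finite_J2 sum_nonneg_eq_0_iff by blast
qed

lemma first_stage_lower_bound:
  assumes x: "first_stage_feasible m K x"
    and feasible: "\<And>h. h \<in> U \<Longrightarrow> second_stage_feasible m x h (Y h)"
    and bipartite: "\<And>h. h \<in> U \<Longrightarrow> bipartite_flow (Y h)"
    and i0: "i0 \<in> J1"
    and linear: "\<And>h j. h \<in> U \<Longrightarrow> j \<in> J2 \<Longrightarrow> Y h i0 j = r j * (1 - h i0)"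
  shows "n - 1 \<le> sum x J2"
proof -
  have x_le_1: "x i \<le> 1" if "i \<in> J1" for i
    using x that J1_subset unfolding first_stage_feasible_def K_def by auto
  have demand: "1 - x j \<le> r j" if j: "j \<in> J2" for j
  proof -
    define A where "A = insert j (J1 - {i0})"
    define h where "h = (\<lambda>k. of_bool (k \<in> A) :: real)"
    have "j \<notin> J1"
      using j J_disjoint by auto
    then have "card A = m div 2"
      unfolding A_def using finite_J1 i0 card_J1 two_le_m by (simp; presburger)
    moreover have "A \<subseteq> {1..m}"
      unfolding A_def using j J1_subset J2_subset by auto
    ultimately have h_U: "h \<in> U"
      unfolding h_def by (simp add: indicator_mem_U)
    have "Y h i j = 0" if "i \<in> J1 - {i0}" for i
      using that j x_le_1 by (intro outflow_vanishes_if_saturated[OF feasible[OF h_U] bipartite[OF h_U]])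
        (auto simp: h_def A_def)
    then have "(\<Sum>i\<in>J1. Y h i j) = Y h i0 j"
      using finite_J1 i0 by (simp add: sum.remove)
    also have "\<dots> = r j"
      using linear[OF h_U j] \<open>j \<notin> J1\<close> i0 by (auto simp: h_def A_def)
    finally have "(\<Sum>i\<in>J1. Y h i j) = r j" .
    moreover have "h j \<le> x j + (\<Sum>i\<in>J1. Y h i j)"
      using feasible[OF h_U] j unfolding second_stage_feasible_bipartite[OF bipartite[OF h_U]] by blast
    ultimately show ?thesis
      by (simp add: h_def A_def)
  qed
  have r_sum_le_1: "sum r J2 \<le> 1"
  proof -
    have "0 + (\<Sum>j\<in>J2. Y (\<lambda>_. 0) i0 j) \<le> x i0"
      using feasible[OF zero_mem_U] i0
      unfolding second_stage_feasible_bipartite[OF bipartite[OF zero_mem_U]] by blast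
    moreover have "(\<Sum>j\<in>J2. Y (\<lambda>_. 0) i0 j) = sum r J2"
      using linear[OF zero_mem_U] by simp
    ultimately show ?thesis
      using x_le_1[OF i0] by simp
  qed
  have "n - sum x J2 = (\<Sum>j\<in>J2. 1 - x j)"
    by (simp add: sum_one_minus_J2)
  also have "\<dots> \<le> sum r J2"
    using demand by (rule sum_mono)
  finally show ?thesis
    using r_sum_le_1 by simp
qed

lemma affine_bipartite_policy_eq:
  assumes "2 \<le> m div 2" "x i0 \<le> 1"
    and feasible: "\<And>h. h \<in> U \<Longrightarrow> second_stage_feasible m x h (affine_policy m P q h)"
    and bipartite: "\<And>h. h \<in> U \<Longrightarrow> bipartite_flow (affine_policy m P q h)"
    and i0: "i0 \<in> J1" and j: "j \<in> J2"
  shows "affine_policy m P q h i0 j = q i0 j * (1 - h i0)"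
proof (rule affine_policy_eq_if_vanishing)
  have vanishes: "affine_policy m P q (\<lambda>k. of_bool (k \<in> A)) i0 j = 0"
    if "i0 \<in> A" "A \<subseteq> {1..m}" "card A \<le> 2" for A
  proof -
    have "(\<lambda>k. of_bool (k \<in> A)) \<in> U"
      using that assms(1) by (intro indicator_mem_U) auto
    then show ?thesis
      using that assms(2) i0 j by (intro outflow_vanishes_if_saturated[OF feasible bipartite]) auto
  qed
  show "i0 \<in> {1..m}"
    using i0 J1_subset by auto
  then show "affine_policy m P q (\<lambda>k. of_bool (k \<in> {i0})) i0 j = 0"
    by (intro vanishes) auto
  show "affine_policy m P q (\<lambda>k'. of_bool (k' \<in> {i0, k})) i0 j = 0" if "k \<in> {1..m}" "k \<noteq> i0" for k
    using that \<open>i0 \<in> {1..m}\<close> by (intro vanishes) (auto simp: card_insert_if)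
qed

lemma affine_first_stage_lower_bound:
  assumes x: "first_stage_feasible m K x"
    and feasible: "\<And>h. h \<in> U \<Longrightarrow> second_stage_feasible m x h (affine_policy m P q h)"
    and bipartite: "\<And>h. h \<in> U \<Longrightarrow> bipartite_flow (affine_policy m P q h)"
  shows "n - 1 \<le> sum x J2"
proof (cases "m div 2 = 1")
  case True
  then have "n = 1"
    using of_nat_half_m by simp
  moreover have "0 \<le> sum x J2"
    using x J2_subset unfolding first_stage_feasible_def by (intro sum_nonneg) auto
  ultimately show ?thesis
    by simp
next
  case False
  then have "2 \<le> m div 2"
    using two_le_m by auto
  obtain i0 where i0: "i0 \<in> J1"
    using card_J1 two_le_m by fastforce
  then have "x i0 \<le> 1"
    using x J1_subset unfolding first_stage_feasible_def K_def by auto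
  show ?thesis
    using x feasible bipartite i0
      affine_bipartite_policy_eq[OF \<open>2 \<le> m div 2\<close> \<open>x i0 \<le> 1\<close> feasible bipartite i0]
    by (rule first_stage_lower_bound)
qed

lemma bipartite_if_flow_cost_finite:
  assumes "second_stage_feasible m x h y" "flow_cost m d y \<noteq> \<infinity>"
  shows "bipartite_flow y"
  unfolding bipartite_flow_def
proof (intro ballI impI)
  fix a b assume ab: "a \<in> {1..m}" "b \<in> {1..m}" "y a b \<noteq> 0"
  then have "0 < y a b"
    using assms(1) unfolding second_stage_feasible_def by force
  show "a \<in> J1 \<and> b \<in> J2"
  proof (rule ccontr)
    assume "\<not> (a \<in> J1 \<and> b \<in> J2)"
    then have "d a b = \<infinity>"
      by (simp add: d_def)
    then have "flow_cost m d y = \<infinity>"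
      using ab \<open>0 < y a b\<close> by (intro flow_cost_eq_PInfty)
    with assms(2) show False ..
  qed
qed

lemma z_Aff_ge: "ereal (n - 1) \<le> z_Aff m c K d U"
  unfolding z_Aff_def
proof (rule INF_greatest, clarify)
  fix x P q
  assume x: "first_stage_feasible m K x"
    and feasible: "\<forall>h\<in>U. second_stage_feasible m x h (affine_policy m P q h)"
  let ?worst = "SUP h\<in>U. flow_cost m d (affine_policy m P q h)"
  show "ereal (n - 1) \<le> first_stage_cost m c x + ?worst"
  proof (cases "?worst = \<infinity>")
    case True
    then show ?thesis
      by (simp add: first_stage_cost_eq)
  next
    case False
    have bipartite: "bipartite_flow (affine_policy m P q h)" if "h \<in> U" for h
    proof (rule bipartite_if_flow_cost_finite)
      show "second_stage_feasible m x h (affine_policy m P q h)"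
        using feasible that by blast
      show "flow_cost m d (affine_policy m P q h) \<noteq> \<infinity>"
        using False SUP_upper[OF that, of "\<lambda>h. flow_cost m d (affine_policy m P q h)"]
        by (auto simp: top_unique[unfolded top_ereal_def])
    qed
    moreover have "U \<noteq> {}"
      using zero_mem_U by auto
    ultimately have "?worst = 0"
      by (simp add: flow_cost_bipartite)
    then show ?thesis
      using affine_first_stage_lower_bound[OF x _ bipartite] feasible
      by (simp add: first_stage_cost_eq)
  qed
qed

end

theorem lemma10:
  fixes m :: nat and J1 J2 :: "nat set"
    and c K :: "nat \<Rightarrow> real" and d :: "nat \<Rightarrow> nat \<Rightarrow> ereal" and U :: "(nat \<Rightarrow> real) set"
  assumes "even m" and "m \<ge> 2"
    and "J1 \<union> J2 = {1..m}" and "J1 \<inter> J2 = {}"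
    and "card J1 = m div 2" and "card J2 = m div 2"
    and "c = (\<lambda>i. if i \<in> J1 then 0 else 1)"
    and "K = (\<lambda>i. 1)"
    and "d = (\<lambda>i j. if i \<in> J1 \<and> j \<in> J2 then 0 else \<infinity>)"
    and "U = {h. (\<forall>i\<in>{1..m}. 0 \<le> h i \<and> h i \<le> 1) \<and> (\<forall>i. i \<notin> {1..m} \<longrightarrow> h i = 0)
                 \<and> (\<Sum>i=1..m. h i) \<le> real m / 2}"
  shows "z_AR m c K d U = 0 \<and> z_Aff m c K d U = ereal (real m / 2 - 1)"
proof -
  interpret affine_gap_instance m J1 J2 c K d U
    using assms by unfold_locales
  show ?thesis
    using z_AR_eq_0 z_Aff_le z_Aff_ge by (simp add: n_def antisym)
qed

end
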